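(* Let $I$ be a compact interval, $J\subseteq I$ a nonempty open interval, $S\subseteq\mathrm{Homeo}_+(I)$ a finite set, $\tau\in(0,1)$, and $(s_n)_{n\ge1}$ an infinite sequence in $S$ such that $\sum_{n\ge0}|s_n\cdots s_1J|^\tau<\infty$ (the $n=0$ term being $|J|^\tau$). If $c\in\mathrm{Homeo}_+(I)$ commutes with every element of $S$ and acts nontrivially on $J$ (i.e. $c(J)=J$ and $c|_J\neq\mathrm{id}$), then $S\cup\{c\}$ is a $(2,\tau)$-nesting. In particular, $S\cup\{c\}\not\subseteq\mathrm{Diff}_+^{1,\tau}(I)$.
   Context: $|\cdot|$ denotes length. $\mathrm{Diff}_+^{1,\tau}(I)$ is the group of orientation-preserving $C^1$-diffeomorphisms of $I$ with $\tau$-Hölder continuous derivative. For an integer $k\ge2$ and $u\in(0,1]$, a finite set $S\subseteq\mathrm{Homeo}_+(I)$ is a $(k,u)$-nesting if there exist nonempty open intervals $J_1\supsetneq\cdots\supsetneq J_k$ and an infinite sequence $(s_1,s_2,\ldots)$ in $S$ such that, with $w_n=s_n\cdots s_1$ ($w_0=\mathrm{id}$): (i) $\sum_{n\ge0}|w_nJ_1|^u<\infty$; (ii) for each $i=2,\ldots,k$ and $n\ge0$ some $s\in S$ satisfies $sw_nJ_i\cap w_nJ_i=\varnothing$ and $sw_nJ_{i-1}=w_nJ_{i-1}$. *)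

theory Defs
  imports "HOL-Analysis.Analysis"
begin

text \<open>Orientation-preserving homeomorphisms of a compact interval I, as functions
  real => real considered on I only.\<close>
definition homeo_plus :: "real set \<Rightarrow> (real \<Rightarrow> real) \<Rightarrow> bool" where
  "homeo_plus I f \<longleftrightarrow> continuous_on I f \<and> strict_mono_on I f \<and> bij_betw f I I"

definition open_interval :: "real set \<Rightarrow> bool" where
  "open_interval J \<longleftrightarrow> (\<exists>x y. x < y \<and> J = {x<..<y})"

definition len :: "real set \<Rightarrow> real" where
  "len A = Sup A - Inf A"

primrec word :: "(nat \<Rightarrow> real \<Rightarrow> real) \<Rightarrow> nat \<Rightarrow> real \<Rightarrow> real" where
  "word s 0 = id"
| "word s (Suc n) = s (Suc n) \<circ> word s n"

definition nesting :: "real set \<Rightarrow> nat \<Rightarrow> real \<Rightarrow> (real \<Rightarrow> real) set \<Rightarrow> bool" where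
  "nesting I k u S \<longleftrightarrow>
     finite S \<and> (\<forall>f\<in>S. homeo_plus I f) \<and> 2 \<le> k \<and> 0 < u \<and> u \<le> 1 \<and>
     (\<exists>J :: nat \<Rightarrow> real set.
        (\<forall>i\<in>{1..k}. open_interval (J i) \<and> J i \<subseteq> I) \<and>
        (\<forall>i\<in>{2..k}. J i \<subset> J (i - 1)) \<and>
        (\<exists>s :: nat \<Rightarrow> real \<Rightarrow> real.
           (\<forall>n\<ge>1. s n \<in> S) \<and>
           summable (\<lambda>n. len (word s n ` J 1) powr u) \<and>
           (\<forall>i\<in>{2..k}. \<forall>n. \<exists>t\<in>S.
               t ` (word s n ` J i) \<inter> word s n ` J i = {} \<and>
               t ` (word s n ` J (i - 1)) = word s n ` J (i - 1))))"

definition C1_on :: "real set \<Rightarrow> (real \<Rightarrow> real) \<Rightarrow> bool" where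
  "C1_on I f \<longleftrightarrow> (\<exists>f'. (\<forall>x\<in>I. (f has_real_derivative f' x) (at x within I)) \<and> continuous_on I f')"

definition diff_plus_1tau :: "real set \<Rightarrow> real \<Rightarrow> (real \<Rightarrow> real) \<Rightarrow> bool" where
  "diff_plus_1tau I \<tau> f \<longleftrightarrow> homeo_plus I f \<and> C1_on I (inv_into I f) \<and>
     (\<exists>f' C. (\<forall>x\<in>I. (f has_real_derivative f' x) (at x within I)) \<and>
        (\<forall>x\<in>I. \<forall>y\<in>I. \<bar>f' x - f' y\<bar> \<le> C * \<bar>x - y\<bar> powr \<tau>))"

end

theory Submission
  imports Defs
begin

text \<open>
  For the nesting, let \<open>x \<in> J\<close> with \<open>c x \<noteq> x\<close> and let \<open>J\<^sub>2\<close> be the open interval between \<open>x\<close>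
  and \<open>c x\<close>. Then \<open>c\<close> preserves \<open>J\<close> and moves \<open>J\<^sub>2\<close> off itself, and since \<open>c\<close> commutes with
  every word \<open>w\<^sub>n = s\<^sub>n \<circ> \<dots> \<circ> s\<^sub>1\<close> it does the same to \<open>w\<^sub>n J\<close> and \<open>w\<^sub>n J\<^sub>2\<close>.

  Suppose all maps were \<open>C\<^sup>1\<close> diffeomorphisms with \<open>\<tau>\<close>-Hoelder derivatives. These derivatives
  are bounded below by some \<open>m > 0\<close> and Hoelder with a common constant \<open>H\<close>, so the summability of
  \<open>|w\<^sub>n J|\<^sup>\<tau>\<close> bounds the distortion of every \<open>w\<^sub>n\<close> on \<open>J\<close> by a constant \<open>K\<close>. The map \<open>c\<close>
  fixes the endpoints of \<open>J\<close>, hence those of \<open>w\<^sub>n J\<close>, so \<open>c' = 1\<close> somewhere on \<open>w\<^sub>n J\<close> and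
  \<open>c' \<ge> 1 - H |w\<^sub>n J|\<^sup>\<tau>\<close> all over it: for each \<open>j\<close>, \<open>c\<^sup>j\<close> shrinks no subinterval of
  \<open>w\<^sub>n J\<close> by more than the factor 2 once \<open>n\<close> is large. Conjugating back by \<open>w\<^sub>n\<close> shows that no iterate \<open>c\<^sup>j\<close> shrinks
  subintervals of \<open>J\<close> by more than the factor \<open>2K\<close>. The orbit of \<open>x\<close> then moves in one direction
  by at least \<open>|c x - x| / 2K\<close> at each step, which is impossible inside the bounded interval \<open>J\<close>.
\<close>

section \<open>Homeomorphisms of an interval and words\<close>

lemma homeo_plusD:
  assumes "homeo_plus I f"
  shows "f ` I = I" "continuous_on I f" "strict_mono_on I f" "inj_on f I"
  using assms unfolding homeo_plus_def bij_betw_def by auto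

lemma homeo_plus_mem: "homeo_plus I f \<Longrightarrow> x \<in> I \<Longrightarrow> f x \<in> I"
  using homeo_plusD(1) by blast

lemma homeo_plus_id: "homeo_plus I id"
  by (simp add: homeo_plus_def strict_mono_on_def)

lemma homeo_plus_comp:
  assumes f: "homeo_plus I f" and g: "homeo_plus I g"
  shows "homeo_plus I (f \<circ> g)"
  unfolding homeo_plus_def
proof (intro conjI)
  show "continuous_on I (f \<circ> g)"
    using homeo_plusD[OF f] homeo_plusD[OF g] by (metis continuous_on_compose)
  show "strict_mono_on I (f \<circ> g)"
  proof (rule strict_mono_onI)
    fix r t assume "r \<in> I" "t \<in> I" "r < t"
    moreover have "g r \<in> I" "g t \<in> I"
      using homeo_plusD(1)[OF g] \<open>r \<in> I\<close> \<open>t \<in> I\<close> by auto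
    ultimately show "(f \<circ> g) r < (f \<circ> g) t"
      using homeo_plusD(3)[OF f] homeo_plusD(3)[OF g] by (simp add: strict_mono_onD)
  qed
  show "bij_betw (f \<circ> g) I I"
    using f g unfolding homeo_plus_def by (metis bij_betw_trans)
qed

lemma homeo_plus_funpow: "homeo_plus I c \<Longrightarrow> homeo_plus I (c ^^ m)"
  by (induction m) (simp_all add: homeo_plus_id homeo_plus_comp flip: id_def)

lemma homeo_plus_word:
  assumes "\<forall>n\<ge>1. s n \<in> S" "\<forall>f\<in>S. homeo_plus I f"
  shows "homeo_plus I (word s n)"
  using assms by (induction n) (simp_all add: homeo_plus_id homeo_plus_comp)

lemma funpow_commute_on:
  assumes "c ` I \<subseteq> I" "\<forall>x\<in>I. c (f x) = f (c x)" "x \<in> I"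
  shows "(c ^^ m) (f x) = f ((c ^^ m) x)"
proof -
  have "(c ^^ m) (f x) = f ((c ^^ m) x) \<and> (c ^^ m) x \<in> I"
    using assms by (induction m) auto
  then show ?thesis ..
qed

lemma word_commute:
  assumes sS: "\<forall>n\<ge>1. s n \<in> S" and hS: "\<forall>f\<in>S. homeo_plus I f"
    and comm: "\<forall>f\<in>S. \<forall>x\<in>I. c (f x) = f (c x)" and "y \<in> I"
  shows "c (word s n y) = word s n (c y)"
proof (induction n)
  case (Suc n)
  have "word s n y \<in> I" using homeo_plus_mem[OF homeo_plus_word[OF sS hS] \<open>y \<in> I\<close>] .
  then show ?case using Suc comm sS by simp
qed simp

lemma word_commute_funpow:
  assumes sS: "\<forall>n\<ge>1. s n \<in> S" and hS: "\<forall>f\<in>S. homeo_plus I f" and hc: "homeo_plus I c"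
    and comm: "\<forall>f\<in>S. \<forall>x\<in>I. c (f x) = f (c x)" and "y \<in> I"
  shows "(c ^^ m) (word s n y) = word s n ((c ^^ m) y)"
proof (rule word_commute[OF sS hS _ \<open>y \<in> I\<close>])
  show "\<forall>f\<in>S. \<forall>x\<in>I. (c ^^ m) (f x) = f ((c ^^ m) x)"
    using funpow_commute_on[of c I] homeo_plusD(1)[OF hc] comm by blast
qed

lemma funpow_image_eq: "f ` A = A \<Longrightarrow> (f ^^ j) ` A = A"
proof (induction j)
  case (Suc j)
  then show ?case by (metis funpow.simps(2) image_comp)
qed simp

lemma dist_le_len_image:
  fixes f :: "real \<Rightarrow> real"
  assumes "continuous_on {p..q} f" "p < q" "y \<in> {p..q}" "z \<in> {p..q}"
  shows "\<bar>f y - f z\<bar> \<le> len (f ` {p<..<q})"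
proof -
  let ?A = "f ` {p<..<q}"
  have "bounded (f ` {p..q})"
    using assms(1) by (intro compact_imp_bounded compact_continuous_image) auto
  then have "bounded ?A" by (rule bounded_subset) auto
  then have "bdd_below ?A" "bdd_above ?A"
    by (auto intro: bounded_imp_bdd_below bounded_imp_bdd_above)
  then have "?A \<subseteq> {Inf ?A..Sup ?A}" by (auto intro!: cInf_lower cSup_upper)
  moreover have "continuous_on (closure {p<..<q}) f" using assms(1,2) by simp
  ultimately have "f ` closure {p<..<q} \<subseteq> {Inf ?A..Sup ?A}"
    by (intro image_closure_subset) auto
  moreover have "f y \<in> f ` closure {p<..<q}" "f z \<in> f ` closure {p<..<q}"
    using assms(2-4) by auto
  ultimately have "f y \<in> {Inf ?A..Sup ?A}" "f z \<in> {Inf ?A..Sup ?A}" by blast+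
  then show ?thesis unfolding len_def by auto
qed

lemma homeo_plus_fixes_endpoints:
  assumes c: "homeo_plus I c" and "{p..q} \<subseteq> I" "p < q" and cJ: "c ` {p<..<q} = {p<..<q}"
  shows "c p = p" "c q = q"
proof -
  have "continuous_on (closure {p<..<q}) c"
    using homeo_plusD(2)[OF c] assms(2,3) by (simp add: continuous_on_subset)
  then have "c ` closure {p<..<q} \<subseteq> {p..q}"
    using cJ by (intro image_closure_subset) auto
  moreover have "p \<in> closure {p<..<q}" "q \<in> closure {p<..<q}" using \<open>p < q\<close> by auto
  ultimately have "p \<le> c p" "c q \<le> q" by auto
  have less: "c x < c y" if "x \<in> {p..q}" "y \<in> {p..q}" "x < y" for x y
  proof -
    have "x \<in> I" "y \<in> I" using that assms(2) by auto
    then show ?thesis using strict_mono_onD[OF homeo_plusD(3)[OF c]] \<open>x < y\<close> by blast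
  qed
  have "c p \<le> p"
  proof (rule dense_ge_bounded[OF \<open>p < q\<close>])
    fix w assume "p < w" "w < q"
    then have "w \<in> c ` {p<..<q}" using cJ by simp
    then obtain y where "y \<in> {p<..<q}" "w = c y" by blast
    then show "c p \<le> w" using less[of p y] by simp
  qed
  moreover have "q \<le> c q"
  proof (rule dense_le_bounded[OF \<open>p < q\<close>])
    fix w assume "p < w" "w < q"
    then have "w \<in> c ` {p<..<q}" using cJ by simp
    then obtain y where "y \<in> {p<..<q}" "w = c y" by blast
    then show "w \<le> c q" using less[of y q] by simp
  qed
  ultimately show "c p = p" "c q = q" using \<open>p \<le> c p\<close> \<open>c q \<le> q\<close> by auto
qed

section \<open>Hoelder derivatives\<close>

lemma mvt_subinterval:
  fixes f f' :: "real \<Rightarrow> real"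
  assumes "a \<le> u" "u < v" "v \<le> b"
    and "\<forall>x\<in>{a..b}. (f has_real_derivative f' x) (at x within {a..b})"
  obtains \<xi> where "u < \<xi>" "\<xi> < v" "f v - f u = f' \<xi> * (v - u)"
proof -
  have "\<exists>x\<in>{u<..<v}. f v - f u = (\<lambda>h. f' x * h) (v - u)"
  proof (rule mvt_simple[OF \<open>u < v\<close>])
    fix x assume "u \<le> x" "x \<le> v"
    then have "(f has_real_derivative f' x) (at x within {a..b})" using assms by auto
    then have "(f has_real_derivative f' x) (at x within {u..v})"
      by (rule DERIV_subset) (use assms in auto)
    then show "(f has_derivative (\<lambda>h. f' x * h)) (at x within {u..v})"
      by (simp add: has_field_derivative_def)
  qed
  then show ?thesis using that by auto
qed

lemma holder_continuous_on:
  fixes f :: "real \<Rightarrow> real"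
  assumes "\<forall>x\<in>I. \<forall>y\<in>I. \<bar>f x - f y\<bar> \<le> H * \<bar>x - y\<bar> powr \<tau>" "0 < \<tau>"
  shows "continuous_on I f"
  unfolding continuous_on_def
proof
  fix x assume x: "x \<in> I"
  have "((\<lambda>y. f y - f x) \<longlongrightarrow> 0) (at x within I)"
  proof (rule Lim_null_comparison)
    show "\<forall>\<^sub>F y in at x within I. norm (f y - f x) \<le> \<bar>H\<bar> * \<bar>y - x\<bar> powr \<tau>"
      unfolding eventually_at_filter
    proof (intro always_eventually allI impI)
      fix y assume "y \<in> I"
      then have "\<bar>f y - f x\<bar> \<le> H * \<bar>y - x\<bar> powr \<tau>" using assms x by auto
      also have "\<dots> \<le> \<bar>H\<bar> * \<bar>y - x\<bar> powr \<tau>" by (intro mult_right_mono) auto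
      finally show "norm (f y - f x) \<le> \<bar>H\<bar> * \<bar>y - x\<bar> powr \<tau>" by simp
    qed
    have "((\<lambda>y. \<bar>y - x\<bar>) \<longlongrightarrow> 0) (at x within I)"
      by (intro tendsto_rabs_zero LIM_zero tendsto_ident_at)
    then have "((\<lambda>y. \<bar>y - x\<bar> powr \<tau>) \<longlongrightarrow> 0) (at x within I)"
      by (rule tendsto_zero_powrI[OF _ tendsto_const]) (use assms(2) in auto)
    then show "((\<lambda>y. \<bar>H\<bar> * \<bar>y - x\<bar> powr \<tau>) \<longlongrightarrow> 0) (at x within I)"
      by (rule tendsto_mult_right_zero)
  qed
  then show "(f \<longlongrightarrow> f x) (at x within I)" by (rule LIM_zero_cancel)
qed

lemma mono_on_deriv_nonneg:
  fixes f :: "real \<Rightarrow> real"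
  assumes "mono_on I f" "x \<in> I" "at x within I \<noteq> bot"
    and "(f has_real_derivative D) (at x within I)"
  shows "0 \<le> D"
proof (rule tendsto_lowerbound)
  show "((\<lambda>y. (f y - f x) / (y - x)) \<longlongrightarrow> D) (at x within I)"
    using assms(4) by (simp add: has_field_derivative_iff)
  show "\<forall>\<^sub>F y in at x within I. 0 \<le> (f y - f x) / (y - x)"
    unfolding eventually_at_filter
  proof (intro always_eventually allI impI)
    fix y assume "y \<in> I"
    then show "0 \<le> (f y - f x) / (y - x)"
      using assms(1,2) by (cases "x \<le> y") (auto simp: mono_on_def divide_nonpos_nonpos)
  qed
qed (use assms(3) in simp)

definition holder_derivative_on ::
    "real set \<Rightarrow> real \<Rightarrow> real \<Rightarrow> real \<Rightarrow> (real \<Rightarrow> real) \<Rightarrow> (real \<Rightarrow> real) \<Rightarrow> bool" where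
  "holder_derivative_on I \<tau> H m f f' \<longleftrightarrow>
     (\<forall>x\<in>I. (f has_real_derivative f' x) (at x within I)) \<and> (\<forall>x\<in>I. m \<le> f' x) \<and>
     (\<forall>x\<in>I. \<forall>y\<in>I. \<bar>f' x - f' y\<bar> \<le> H * \<bar>x - y\<bar> powr \<tau>)"

lemma holder_derivative_on_mono:
  assumes "holder_derivative_on I \<tau> H m f f'" "H \<le> H'" "m' \<le> m"
  shows "holder_derivative_on I \<tau> H' m' f f'"
  unfolding holder_derivative_on_def
proof (intro conjI ballI)
  fix x y assume "x \<in> I" "y \<in> I"
  then have "\<bar>f' x - f' y\<bar> \<le> H * \<bar>x - y\<bar> powr \<tau>"
    using assms(1) by (simp add: holder_derivative_on_def)
  also have "\<dots> \<le> H' * \<bar>x - y\<bar> powr \<tau>" using assms(2) by (simp add: mult_right_mono)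
  finally show "\<bar>f' x - f' y\<bar> \<le> H' * \<bar>x - y\<bar> powr \<tau>" .
qed (use assms in \<open>auto simp: holder_derivative_on_def\<close>)

lemma holder_derivative_on_pos:
  "holder_derivative_on I \<tau> H m f f' \<Longrightarrow> 0 < m \<Longrightarrow> x \<in> I \<Longrightarrow> 0 < f' x"
  unfolding holder_derivative_on_def by (meson less_le_trans)

lemma diff_plus_1tau_holder_derivative:
  assumes ab: "a < b" and \<tau>: "0 < \<tau>" and f: "diff_plus_1tau {a..b} \<tau> f"
  obtains f' H m where "holder_derivative_on {a..b} \<tau> H m f f'" "0 \<le> H" "0 < m"
proof -
  let ?I = "{a..b}"
  obtain f' H where der: "\<forall>x\<in>?I. (f has_real_derivative f' x) (at x within ?I)"
    and hol: "\<forall>x\<in>?I. \<forall>y\<in>?I. \<bar>f' x - f' y\<bar> \<le> H * \<bar>x - y\<bar> powr \<tau>"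
    using f unfolding diff_plus_1tau_def by blast
  have hf: "homeo_plus ?I f" and "C1_on ?I (inv_into ?I f)"
    using f unfolding diff_plus_1tau_def by auto
  then obtain g' where g': "\<forall>y\<in>?I. (inv_into ?I f has_real_derivative g' y) (at y within ?I)"
    unfolding C1_on_def by blast
  have nontrivial: "at x within ?I \<noteq> bot" if "x \<in> ?I" for x
    using ab that by (auto simp: trivial_limit_within islimpt_Icc)
  have nonzero: "f' x \<noteq> 0" if x: "x \<in> ?I" for x
  proof
    assume "f' x = 0"
    have "(inv_into ?I f has_real_derivative g' (f x)) (at (f x) within f ` ?I)"
      using g' x homeo_plusD(1)[OF hf] by auto
    from DERIV_image_chain[OF this der[rule_format, OF x]]
    have "((\<lambda>y. y) has_real_derivative g' (f x) * f' x) (at x within ?I)"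
      by (rule has_field_derivative_transform_within[where d=1])
        (use x homeo_plusD(4)[OF hf] in auto)
    then have "g' (f x) * f' x = 1"
      using has_field_derivative_unique[OF _ DERIV_ident nontrivial[OF x]] by simp
    with \<open>f' x = 0\<close> show False by simp
  qed
  have pos: "0 < f' x" if x: "x \<in> ?I" for x
  proof -
    have "mono_on ?I f" using homeo_plusD(3)[OF hf] by (rule strict_mono_on_imp_mono_on)
    then have "0 \<le> f' x"
      using mono_on_deriv_nonneg[OF _ x nontrivial[OF x]] der x by blast
    then show ?thesis using nonzero[OF x] by simp
  qed
  have "continuous_on ?I f'" using holder_continuous_on[OF hol \<tau>] .
  then obtain x0 where x0: "x0 \<in> ?I" "\<forall>y\<in>?I. f' x0 \<le> f' y"
    using continuous_attains_inf[of ?I f'] ab by auto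
  have "holder_derivative_on ?I \<tau> H (f' x0) f f'"
    unfolding holder_derivative_on_def using der hol x0 by blast
  then have "holder_derivative_on ?I \<tau> \<bar>H\<bar> (f' x0) f f'"
    by (rule holder_derivative_on_mono) auto
  then show ?thesis using that pos[OF x0(1)] by simp
qed

lemma diff_plus_1tau_uniform_holder_derivative:
  assumes ab: "a < b" and \<tau>: "0 < \<tau>" and "finite F" and "\<forall>f\<in>F. diff_plus_1tau {a..b} \<tau> f"
  obtains D H m where "\<forall>f\<in>F. holder_derivative_on {a..b} \<tau> H m f (D f)" "0 \<le> H" "0 < m"
proof -
  have "\<exists>D H m. (\<forall>f\<in>F. holder_derivative_on {a..b} \<tau> H m f (D f)) \<and> 0 \<le> H \<and> 0 < m"
    using assms(3,4)
  proof (induction F rule: finite_induct)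
    case empty
    show ?case by (intro exI[of _ undefined] exI[of _ 0] exI[of _ 1]) simp
  next
    case (insert f F)
    obtain D H m where D: "\<forall>g\<in>F. holder_derivative_on {a..b} \<tau> H m g (D g)" "0 \<le> H" "0 < m"
      using insert.IH insert.prems by blast
    have "diff_plus_1tau {a..b} \<tau> f" using insert.prems by simp
    then obtain f' H1 m1 where f': "holder_derivative_on {a..b} \<tau> H1 m1 f f'" "0 \<le> H1" "0 < m1"
      by (rule diff_plus_1tau_holder_derivative[OF ab \<tau>])
    have "holder_derivative_on {a..b} \<tau> (max H H1) (min m m1) g (D g)" if "g \<in> F" for g
      by (rule holder_derivative_on_mono[OF D(1)[rule_format, OF that]]) auto
    moreover have "holder_derivative_on {a..b} \<tau> (max H H1) (min m m1) f f'"
      using f'(1) by (rule holder_derivative_on_mono) auto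
    ultimately have "\<forall>g\<in>insert f F.
        holder_derivative_on {a..b} \<tau> (max H H1) (min m m1) g ((D(f := f')) g)"
      using \<open>f \<notin> F\<close> by auto
    then show ?case
      using D f' by (intro exI[of _ "D(f := f')"] exI[of _ "max H H1"] exI[of _ "min m m1"]) auto
  qed
  then show ?thesis using that by blast
qed

lemma funpow_expansion:
  fixes f :: "real \<Rightarrow> real"
  assumes into: "\<forall>x\<in>{\<alpha>..\<beta>}. f x \<in> {\<alpha>..\<beta>}" and "0 \<le> \<rho>"
    and expand: "\<And>x y. \<alpha> \<le> x \<Longrightarrow> x \<le> y \<Longrightarrow> y \<le> \<beta> \<Longrightarrow> \<rho> * (y - x) \<le> f y - f x"
  shows "\<alpha> \<le> x \<Longrightarrow> x \<le> y \<Longrightarrow> y \<le> \<beta> \<Longrightarrow> \<rho> ^ j * (y - x) \<le> (f ^^ j) y - (f ^^ j) x"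
proof (induction j arbitrary: x y)
  case (Suc j)
  have fx: "\<alpha> \<le> f x" and fy: "f y \<le> \<beta>" using into Suc.prems by auto
  have "0 \<le> \<rho> * (y - x)" using \<open>0 \<le> \<rho>\<close> Suc.prems by simp
  then have "f x \<le> f y" using expand[OF Suc.prems] by linarith
  have "\<rho> ^ Suc j * (y - x) = \<rho> ^ j * (\<rho> * (y - x))" by simp
  also have "\<dots> \<le> \<rho> ^ j * (f y - f x)"
    using expand[OF Suc.prems] \<open>0 \<le> \<rho>\<close> by (simp add: mult_left_mono)
  also have "\<dots> \<le> (f ^^ j) (f y) - (f ^^ j) (f x)" using Suc.IH[OF fx \<open>f x \<le> f y\<close> fy] .
  finally show ?case by (simp add: funpow_swap1)
qed simp

lemma fixed_interval_iterate_expansion: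
  assumes c: "homeo_plus {a..b} c" and c': "holder_derivative_on {a..b} \<tau> H m c c'"
    and "0 \<le> H" "0 \<le> \<tau>" and \<alpha>\<beta>: "a \<le> \<alpha>" "\<alpha> < \<beta>" "\<beta> \<le> b"
    and fixed: "c \<alpha> = \<alpha>" "c \<beta> = \<beta>" and small: "H * (\<beta> - \<alpha>) powr \<tau> \<le> 1"
  shows "\<alpha> \<le> x \<Longrightarrow> x \<le> y \<Longrightarrow> y \<le> \<beta> \<Longrightarrow>
    (1 - H * (\<beta> - \<alpha>) powr \<tau>) ^ j * (y - x) \<le> (c ^^ j) y - (c ^^ j) x"
proof (rule funpow_expansion)
  have der: "\<forall>x\<in>{a..b}. (c has_real_derivative c' x) (at x within {a..b})"
    and hol: "\<forall>x\<in>{a..b}. \<forall>y\<in>{a..b}. \<bar>c' x - c' y\<bar> \<le> H * \<bar>x - y\<bar> powr \<tau>"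
    using c' by (auto simp: holder_derivative_on_def)
  have mono: "c x \<le> c y" if "a \<le> x" "x \<le> y" "y \<le> b" for x y
    using strict_mono_on_leD[OF homeo_plusD(3)[OF c]] that by auto
  show "\<forall>x\<in>{\<alpha>..\<beta>}. c x \<in> {\<alpha>..\<beta>}"
    using mono[of \<alpha>] mono[of _ \<beta>] fixed \<alpha>\<beta> by auto
  obtain \<eta> where \<eta>: "\<alpha> < \<eta>" "\<eta> < \<beta>" "c \<beta> - c \<alpha> = c' \<eta> * (\<beta> - \<alpha>)"
    using mvt_subinterval[OF \<alpha>\<beta> der] .
  have "c' \<eta> = 1" using \<eta> fixed by simp
  have lower: "1 - H * (\<beta> - \<alpha>) powr \<tau> \<le> c' \<xi>" if "\<alpha> \<le> \<xi>" "\<xi> \<le> \<beta>" for \<xi>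
  proof -
    have "\<bar>\<xi> - \<eta>\<bar> powr \<tau> \<le> (\<beta> - \<alpha>) powr \<tau>"
      using that \<eta> \<open>0 \<le> \<tau>\<close> by (intro powr_mono2) auto
    then have "H * \<bar>\<xi> - \<eta>\<bar> powr \<tau> \<le> H * (\<beta> - \<alpha>) powr \<tau>"
      using \<open>0 \<le> H\<close> by (rule mult_left_mono)
    moreover have "\<bar>c' \<xi> - c' \<eta>\<bar> \<le> H * \<bar>\<xi> - \<eta>\<bar> powr \<tau>"
      using hol that \<eta> \<alpha>\<beta> by simp
    ultimately show ?thesis using \<open>c' \<eta> = 1\<close> by linarith
  qed
  show "(1 - H * (\<beta> - \<alpha>) powr \<tau>) * (y - x) \<le> c y - c x"
    if "\<alpha> \<le> x" "x \<le> y" "y \<le> \<beta>" for x y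
  proof (cases "x = y")
    case False
    with that obtain \<xi> where \<xi>: "x < \<xi>" "\<xi> < y" "c y - c x = c' \<xi> * (y - x)"
      using mvt_subinterval[of a x y b c c'] der \<alpha>\<beta> by auto
    then show ?thesis using lower[of \<xi>] that by (simp add: mult_right_mono)
  qed simp
qed (use small in simp)

section \<open>Bounded distortion of words\<close>

definition word_deriv ::
    "((real \<Rightarrow> real) \<Rightarrow> real \<Rightarrow> real) \<Rightarrow> (nat \<Rightarrow> real \<Rightarrow> real) \<Rightarrow> nat \<Rightarrow> real \<Rightarrow> real" where
  "word_deriv D s n y = (\<Prod>k<n. D (s (Suc k)) (word s k y))"

lemma has_real_derivative_word:
  assumes sS: "\<forall>n\<ge>1. s n \<in> S" and hS: "\<forall>f\<in>S. homeo_plus I f"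
    and D: "\<forall>f\<in>S. \<forall>x\<in>I. (f has_real_derivative D f x) (at x within I)" and "y \<in> I"
  shows "(word s n has_real_derivative word_deriv D s n y) (at y within I)"
proof (induction n)
  case 0
  show ?case by (simp add: word_deriv_def id_def)
next
  case (Suc n)
  have into: "word s n ` I \<subseteq> I" using homeo_plusD(1)[OF homeo_plus_word[OF sS hS]] by simp
  then have "(s (Suc n) has_real_derivative D (s (Suc n)) (word s n y)) (at (word s n y) within I)"
    using D sS \<open>y \<in> I\<close> by auto
  then have "(s (Suc n) has_real_derivative D (s (Suc n)) (word s n y))
      (at (word s n y) within word s n ` I)"
    by (rule DERIV_subset[OF _ into])
  from DERIV_image_chain[OF this Suc.IH]
  show ?case by (simp add: word_deriv_def mult.commute comp_def)
qed

lemma word_deriv_nonneg: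
  assumes sS: "\<forall>n\<ge>1. s n \<in> S" and hS: "\<forall>f\<in>S. homeo_plus I f"
    and D: "\<forall>f\<in>S. \<forall>x\<in>I. 0 \<le> D f x" and "y \<in> I"
  shows "0 \<le> word_deriv D s n y"
  unfolding word_deriv_def
  using homeo_plus_mem[OF homeo_plus_word[OF sS hS] \<open>y \<in> I\<close>] D sS by (intro prod_nonneg) simp

lemma holder_derivative_ratio_bound:
  assumes f': "holder_derivative_on I \<tau> H m f f'" and "0 \<le> H" "0 < m"
    and "u \<in> I" "v \<in> I" and "\<bar>u - v\<bar> powr \<tau> \<le> \<delta>"
  shows "f' u \<le> exp (H / m * \<delta>) * f' v"
proof -
  have "0 \<le> \<delta>" using assms(6) by (rule order_trans[OF powr_ge_zero])
  have "m \<le> f' v" and "\<bar>f' u - f' v\<bar> \<le> H * \<bar>u - v\<bar> powr \<tau>"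
    using f' assms(4,5) by (auto simp: holder_derivative_on_def)
  moreover have "H * \<bar>u - v\<bar> powr \<tau> \<le> H * \<delta>"
    using assms(6) \<open>0 \<le> H\<close> by (rule mult_left_mono)
  ultimately have "f' u \<le> f' v + H * \<delta>" by linarith
  also have "H * \<delta> = m * (H / m * \<delta>)" using \<open>0 < m\<close> by simp
  also have "\<dots> \<le> f' v * (H / m * \<delta>)"
    using \<open>m \<le> f' v\<close> \<open>0 \<le> H\<close> \<open>0 < m\<close> \<open>0 \<le> \<delta>\<close> by (intro mult_right_mono) auto
  also have "f' v + f' v * (H / m * \<delta>) = f' v * (1 + H / m * \<delta>)" by algebra
  also have "\<dots> \<le> f' v * exp (H / m * \<delta>)"
    using \<open>m \<le> f' v\<close> \<open>0 < m\<close> by (intro mult_left_mono exp_ge_add_one_self) auto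
  finally show ?thesis by (simp add: mult.commute)
qed

lemma word_deriv_le_exp_sum:
  assumes sS: "\<forall>n\<ge>1. s n \<in> S" and hS: "\<forall>f\<in>S. homeo_plus {a..b} f"
    and D: "\<forall>f\<in>S. holder_derivative_on {a..b} \<tau> H m f (D f)" and "0 \<le> H" "0 < m" "0 \<le> \<tau>"
    and pq: "a \<le> p" "p < q" "q \<le> b" and y: "y \<in> {p..q}" and z: "z \<in> {p..q}"
  shows "word_deriv D s n y
    \<le> exp (H / m * (\<Sum>k<n. len (word s k ` {p<..<q}) powr \<tau>)) * word_deriv D s n z"
proof -
  have into: "word s k w \<in> {a..b}" if "w \<in> {p..q}" for k w
    using homeo_plus_mem[OF homeo_plus_word[OF sS hS]] that pq by auto
  have Dk: "holder_derivative_on {a..b} \<tau> H m (s (Suc k)) (D (s (Suc k)))" for k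
    using D sS by simp
  have nonneg: "0 \<le> D (s (Suc k)) (word s k w)" if "w \<in> {p..q}" for k w
    using holder_derivative_on_pos[OF Dk[of k] \<open>0 < m\<close> into[OF that, of k]] by simp
  have factor: "D (s (Suc k)) (word s k y)
      \<le> exp (H / m * len (word s k ` {p<..<q}) powr \<tau>) * D (s (Suc k)) (word s k z)" for k
  proof (rule holder_derivative_ratio_bound[OF Dk \<open>0 \<le> H\<close> \<open>0 < m\<close> into[OF y] into[OF z]])
    have "continuous_on {p..q} (word s k)"
      using homeo_plusD(2)[OF homeo_plus_word[OF sS hS]] by (rule continuous_on_subset) (use pq in auto)
    then have "\<bar>word s k y - word s k z\<bar> \<le> len (word s k ` {p<..<q})"
      using dist_le_len_image pq y z by blast
    then show "\<bar>word s k y - word s k z\<bar> powr \<tau> \<le> len (word s k ` {p<..<q}) powr \<tau>"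
      using \<open>0 \<le> \<tau>\<close> by (intro powr_mono2) auto
  qed
  have "word_deriv D s n y
      \<le> (\<Prod>k<n. exp (H / m * len (word s k ` {p<..<q}) powr \<tau>) * D (s (Suc k)) (word s k z))"
    unfolding word_deriv_def using factor nonneg[OF y] by (intro prod_mono) auto
  then show ?thesis by (simp add: word_deriv_def prod.distrib exp_sum sum_distrib_left)
qed

lemma word_deriv_distortion:
  assumes sS: "\<forall>n\<ge>1. s n \<in> S" and hS: "\<forall>f\<in>S. homeo_plus {a..b} f"
    and D: "\<forall>f\<in>S. holder_derivative_on {a..b} \<tau> H m f (D f)" and "0 \<le> H" "0 < m" "0 \<le> \<tau>"
    and pq: "a \<le> p" "p < q" "q \<le> b"
    and summ: "summable (\<lambda>n. len (word s n ` {p<..<q}) powr \<tau>)"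
  obtains K where "0 < K"
    "\<And>n y z. y \<in> {p..q} \<Longrightarrow> z \<in> {p..q} \<Longrightarrow> word_deriv D s n y \<le> K * word_deriv D s n z"
proof
  let ?\<delta> = "\<lambda>k. len (word s k ` {p<..<q}) powr \<tau>"
  show "0 < exp (H / m * suminf ?\<delta>)" by simp
  fix n y z assume "y \<in> {p..q}" "z \<in> {p..q}"
  have "0 \<le> D f x" if "f \<in> S" "x \<in> {a..b}" for f x
    using holder_derivative_on_pos[of "{a..b}" \<tau> H m f "D f" x] D that \<open>0 < m\<close> by simp
  moreover have "z \<in> {a..b}" using \<open>z \<in> {p..q}\<close> pq by simp
  ultimately have "0 \<le> word_deriv D s n z" using word_deriv_nonneg[OF sS hS] by blast
  moreover have "(\<Sum>k<n. ?\<delta> k) \<le> suminf ?\<delta>" using summ by (intro sum_le_suminf) auto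
  then have "exp (H / m * (\<Sum>k<n. ?\<delta> k)) \<le> exp (H / m * suminf ?\<delta>)"
    using \<open>0 \<le> H\<close> \<open>0 < m\<close> by (simp add: mult_left_mono divide_right_mono)
  ultimately show "word_deriv D s n y \<le> exp (H / m * suminf ?\<delta>) * word_deriv D s n z"
    using word_deriv_le_exp_sum[OF assms(1-9) \<open>y \<in> {p..q}\<close> \<open>z \<in> {p..q}\<close>, of n]
    by (meson mult_right_mono order_trans)
qed

lemma difference_quotient_distortion:
  fixes w w' :: "real \<Rightarrow> real"
  assumes w: "\<forall>x\<in>{a..b}. (w has_real_derivative w' x) (at x within {a..b})"
    and K: "\<And>\<eta> \<xi>. \<eta> \<in> {p..q} \<Longrightarrow> \<xi> \<in> {p..q} \<Longrightarrow> w' \<eta> \<le> K * w' \<xi>"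
    and "a \<le> p" "q \<le> b" and uv: "p \<le> u" "u < v" "v \<le> q" and uv': "p \<le> u'" "u' < v'" "v' \<le> q"
  shows "(w v' - w u') * (v - u) \<le> K * (w v - w u) * (v' - u')"
proof -
  obtain \<xi> where \<xi>: "u < \<xi>" "\<xi> < v" "w v - w u = w' \<xi> * (v - u)"
    using mvt_subinterval[of a u v b w w'] w uv assms(3,4) by auto
  obtain \<eta> where \<eta>: "u' < \<eta>" "\<eta> < v'" "w v' - w u' = w' \<eta> * (v' - u')"
    using mvt_subinterval[of a u' v' b w w'] w uv' assms(3,4) by auto
  have "(w v' - w u') * (v - u) = w' \<eta> * ((v' - u') * (v - u))" using \<eta>(3) by simp
  also have "\<dots> \<le> K * w' \<xi> * ((v' - u') * (v - u))"
    using K[of \<eta> \<xi>] \<xi> \<eta> uv uv' by (intro mult_right_mono) auto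
  also have "\<dots> = K * (w v - w u) * (v' - u')" using \<xi>(3) by simp
  finally show ?thesis .
qed

section \<open>Commuting maps with Hoelder derivative act trivially\<close>

lemma commuting_iterate_expands_word_image:
  assumes sS: "\<forall>n\<ge>1. s n \<in> S" and hS: "\<forall>f\<in>S. homeo_plus {a..b} f"
    and c: "homeo_plus {a..b} c" and comm: "\<forall>f\<in>S. \<forall>x\<in>{a..b}. c (f x) = f (c x)"
    and c': "holder_derivative_on {a..b} \<tau> H m c c'" and "0 \<le> H" "0 < \<tau>"
    and pq: "a \<le> p" "p < q" "q \<le> b" and cJ: "c ` {p<..<q} = {p<..<q}"
    and summ: "summable (\<lambda>n. len (word s n ` {p<..<q}) powr \<tau>)"
  obtains n where "\<And>u v. p \<le> u \<Longrightarrow> u \<le> v \<Longrightarrow> v \<le> q \<Longrightarrow>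
    (word s n v - word s n u) / 2 \<le> (c ^^ j) (word s n v) - (c ^^ j) (word s n u)"
proof -
  define \<epsilon> where "\<epsilon> n = H * len (word s n ` {p<..<q}) powr \<tau>" for n
  have "\<epsilon> \<longlonglongrightarrow> 0"
    unfolding \<epsilon>_def by (intro tendsto_mult_right_zero summable_LIMSEQ_zero summ)
  then have "(\<lambda>n. (1 - \<epsilon> n) ^ j) \<longlonglongrightarrow> 1"
    using tendsto_power[OF tendsto_diff[OF tendsto_const \<open>\<epsilon> \<longlonglongrightarrow> 0\<close>], of 1 j] by simp
  then have "\<forall>\<^sub>F n in sequentially. 1 / 2 < (1 - \<epsilon> n) ^ j" by (rule order_tendstoD(1)) simp
  moreover have "\<forall>\<^sub>F n in sequentially. \<epsilon> n < 1" using \<open>\<epsilon> \<longlonglongrightarrow> 0\<close> by (rule order_tendstoD(2)) simp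
  ultimately obtain n where half: "1 / 2 < (1 - \<epsilon> n) ^ j" and "\<epsilon> n \<le> 1"
    by (metis (mono_tags, lifting) eventually_conj eventually_sequentially less_imp_le order_refl)
  let ?w = "word s n" and ?\<rho> = "1 - H * (word s n q - word s n p) powr \<tau>"
  have w: "homeo_plus {a..b} ?w" using homeo_plus_word[OF sS hS] .
  have ends: "a \<le> ?w p" "?w p < ?w q" "?w q \<le> b"
    using homeo_plus_mem[OF w] strict_mono_onD[OF homeo_plusD(3)[OF w]] pq by auto
  have "c p = p" "c q = q" using homeo_plus_fixes_endpoints[OF c _ \<open>p < q\<close> cJ] pq by auto
  then have fixed: "c (?w p) = ?w p" "c (?w q) = ?w q"
    using word_commute[OF sS hS comm] pq by auto
  have "?w q - ?w p \<le> len (?w ` {p<..<q})"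
    using dist_le_len_image[of p q ?w q p] continuous_on_subset[OF homeo_plusD(2)[OF w]] pq by auto
  then have "H * (?w q - ?w p) powr \<tau> \<le> \<epsilon> n"
    unfolding \<epsilon>_def using ends \<open>0 \<le> H\<close> \<open>0 < \<tau>\<close> by (intro mult_left_mono powr_mono2) auto
  then have "1 - \<epsilon> n \<le> ?\<rho>" and small: "H * (?w q - ?w p) powr \<tau> \<le> 1"
    using \<open>\<epsilon> n \<le> 1\<close> by auto
  then have "(1 - \<epsilon> n) ^ j \<le> ?\<rho> ^ j" using \<open>\<epsilon> n \<le> 1\<close> by (intro power_mono) auto
  then have "1 / 2 < ?\<rho> ^ j" using half by linarith
  show ?thesis
  proof (rule that)
    fix u v assume uv: "p \<le> u" "u \<le> v" "v \<le> q"
    then have "?w p \<le> ?w u" "?w u \<le> ?w v" "?w v \<le> ?w q"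
      using strict_mono_on_leD[OF homeo_plusD(3)[OF w]] pq by auto
    then have "?\<rho> ^ j * (?w v - ?w u) \<le> (c ^^ j) (?w v) - (c ^^ j) (?w u)"
      using fixed_interval_iterate_expansion[OF c c' \<open>0 \<le> H\<close> _ ends fixed small] \<open>0 < \<tau>\<close> by simp
    moreover have "(?w v - ?w u) / 2 \<le> ?\<rho> ^ j * (?w v - ?w u)"
      using mult_right_mono[of "1 / 2" "?\<rho> ^ j" "?w v - ?w u"] \<open>1 / 2 < ?\<rho> ^ j\<close> \<open>?w u \<le> ?w v\<close>
      by simp
    ultimately show "(?w v - ?w u) / 2 \<le> (c ^^ j) (?w v) - (c ^^ j) (?w u)" by linarith
  qed
qed

lemma commuting_iterates_uniformly_expanding:
  assumes sS: "\<forall>n\<ge>1. s n \<in> S" and hS: "\<forall>f\<in>S. homeo_plus {a..b} f"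
    and c: "homeo_plus {a..b} c" and comm: "\<forall>f\<in>S. \<forall>x\<in>{a..b}. c (f x) = f (c x)"
    and D: "\<forall>f\<in>insert c S. holder_derivative_on {a..b} \<tau> H m f (D f)" and "0 \<le> H" "0 < m" "0 < \<tau>"
    and pq: "a \<le> p" "p < q" "q \<le> b" and cJ: "c ` {p<..<q} = {p<..<q}"
    and summ: "summable (\<lambda>n. len (word s n ` {p<..<q}) powr \<tau>)"
  obtains K where "0 < K"
    "\<And>j u v. p < u \<Longrightarrow> u < v \<Longrightarrow> v < q \<Longrightarrow> v - u \<le> K * ((c ^^ j) v - (c ^^ j) u)"
proof -
  obtain K where "0 < K" and K:
    "\<And>n y z. y \<in> {p..q} \<Longrightarrow> z \<in> {p..q} \<Longrightarrow> word_deriv D s n y \<le> K * word_deriv D s n z"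
    using word_deriv_distortion[of s S a b \<tau> H m D p q] assms \<open>0 < \<tau>\<close> by auto
  have "v - u \<le> 2 * K * ((c ^^ j) v - (c ^^ j) u)" if uv: "p < u" "u < v" "v < q" for j u v
  proof -
    obtain n where n: "\<And>u v. p \<le> u \<Longrightarrow> u \<le> v \<Longrightarrow> v \<le> q \<Longrightarrow>
        (word s n v - word s n u) / 2 \<le> (c ^^ j) (word s n v) - (c ^^ j) (word s n u)"
      using commuting_iterate_expands_word_image[OF sS hS c comm _ \<open>0 \<le> H\<close> \<open>0 < \<tau>\<close> pq cJ summ] D
      by blast
    let ?w = "word s n" and ?u' = "(c ^^ j) u" and ?v' = "(c ^^ j) v"
    have w: "homeo_plus {a..b} ?w" using homeo_plus_word[OF sS hS] .
    have wder: "\<forall>x\<in>{a..b}. (?w has_real_derivative word_deriv D s n x) (at x within {a..b})"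
      using has_real_derivative_word[OF sS hS] D by (simp add: holder_derivative_on_def)
    have "?u' \<in> (c ^^ j) ` {p<..<q}" "?v' \<in> (c ^^ j) ` {p<..<q}" using uv by auto
    then have "?u' \<in> {p<..<q}" "?v' \<in> {p<..<q}" by (simp_all only: funpow_image_eq[OF cJ])
    moreover have "?u' < ?v'"
      using strict_mono_onD[OF homeo_plusD(3)[OF homeo_plus_funpow[OF c]]] uv pq by simp
    ultimately have distortion: "(?w ?v' - ?w ?u') * (v - u) \<le> K * (?w v - ?w u) * (?v' - ?u')"
      using uv by (intro difference_quotient_distortion[OF wder K[where n = n] pq(1,3)]) auto
    have "(?w v - ?w u) / 2 \<le> (c ^^ j) (?w v) - (c ^^ j) (?w u)" using n uv by simp
    also have "\<dots> = ?w ?v' - ?w ?u'" using word_commute_funpow[OF sS hS c comm] uv pq by simp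
    finally have "(?w v - ?w u) / 2 * (v - u) \<le> (?w ?v' - ?w ?u') * (v - u)"
      using uv by (intro mult_right_mono) auto
    also note distortion
    finally have "(?w v - ?w u) * (v - u) \<le> (?w v - ?w u) * (2 * K * (?v' - ?u'))"
      by (simp add: field_simps)
    moreover have "?w u < ?w v" using strict_mono_onD[OF homeo_plusD(3)[OF w]] uv pq by simp
    ultimately show ?thesis by simp
  qed
  then show ?thesis using that[of "2 * K"] \<open>0 < K\<close> by simp
qed

lemma bounded_sequence_small_increment:
  fixes g :: "nat \<Rightarrow> real"
  assumes "\<And>j. g j \<in> {a..b}" "0 < \<delta>"
  obtains j where "g (Suc j) - g j < \<delta>"
proof -
  have "\<exists>j. g (Suc j) - g j < \<delta>"
  proof (rule ccontr)
    assume "\<nexists>j. g (Suc j) - g j < \<delta>"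
    then have step: "\<delta> \<le> g (Suc j) - g j" for j by (simp add: not_less)
    have linear: "g 0 + real j * \<delta> \<le> g j" for j
    proof (induction j)
      case (Suc j)
      then show ?case using step[of j] by (simp add: algebra_simps)
    qed simp
    obtain j where "b - a < real j * \<delta>" using ex_less_of_nat_mult[OF \<open>0 < \<delta>\<close>] by blast
    then show False using linear[of j] assms(1)[of 0] assms(1)[of j] by simp
  qed
  then show ?thesis using that by blast
qed

lemma uniformly_expanding_iterates_fix:
  fixes c :: "real \<Rightarrow> real"
  assumes cJ: "c ` {p<..<q} = {p<..<q}" and "0 < K"
    and K: "\<And>j u v. p < u \<Longrightarrow> u < v \<Longrightarrow> v < q \<Longrightarrow> v - u \<le> K * ((c ^^ j) v - (c ^^ j) u)"
    and x: "x \<in> {p<..<q}"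
  shows "c x = x"
proof (rule ccontr)
  assume "c x \<noteq> x"
  have orbit: "(c ^^ j) y \<in> {p<..<q}" if "y \<in> {p<..<q}" for j y
    using funpow_image_eq[OF cJ, of j] that by blast
  have cx: "c x \<in> {p<..<q}" using cJ x by blast
  show False
  proof (cases "x < c x")
    case True
    have step: "(c x - x) / K \<le> (c ^^ Suc j) x - (c ^^ j) x" for j
      using K[of x "c x" j] x cx True \<open>0 < K\<close>
      by (simp add: funpow_swap1 pos_divide_le_eq mult.commute)
    have "(c ^^ j) x \<in> {p..q}" for j using orbit[OF x, of j] by simp
    moreover have "0 < (c x - x) / K" using True \<open>0 < K\<close> by simp
    ultimately obtain j where "(c ^^ Suc j) x - (c ^^ j) x < (c x - x) / K"
      by (rule bounded_sequence_small_increment)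
    with step[of j] show False by linarith
  next
    case False
    then have "c x < x" using \<open>c x \<noteq> x\<close> by simp
    have step: "(x - c x) / K \<le> - (c ^^ Suc j) x - - (c ^^ j) x" for j
      using K[of "c x" x j] x cx \<open>c x < x\<close> \<open>0 < K\<close>
      by (simp add: funpow_swap1 pos_divide_le_eq mult.commute)
    have "- (c ^^ j) x \<in> {-q..-p}" for j using orbit[OF x, of j] by simp
    moreover have "0 < (x - c x) / K" using \<open>c x < x\<close> \<open>0 < K\<close> by simp
    ultimately obtain j where "- (c ^^ Suc j) x - - (c ^^ j) x < (x - c x) / K"
      by (rule bounded_sequence_small_increment)
    with step[of j] show False by linarith
  qed
qed

section \<open>The nesting\<close>

lemma strict_mono_on_displaces_gap:
  fixes c :: "real \<Rightarrow> real"
  assumes "strict_mono_on I c" "{min x (c x)..max x (c x)} \<subseteq> I"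
  shows "c ` {min x (c x)<..<max x (c x)} \<inter> {min x (c x)<..<max x (c x)} = {}"
proof -
  have "c y \<notin> {min x (c x)<..<max x (c x)}" if y: "y \<in> {min x (c x)<..<max x (c x)}" for y
  proof -
    have "x \<in> I" "y \<in> I" using y assms(2) by auto
    consider "x < c x" "x < y" | "c x < x" "y < x" using y by (cases "x < c x") auto
    then show ?thesis
    proof cases
      case 1
      then show ?thesis using strict_mono_onD[OF assms(1) \<open>x \<in> I\<close> \<open>y \<in> I\<close>] by auto
    next
      case 2
      then show ?thesis using strict_mono_onD[OF assms(1) \<open>y \<in> I\<close> \<open>x \<in> I\<close>] by auto
    qed
  qed
  then show ?thesis by blast
qed

lemma image_word_commute:
  assumes sS: "\<forall>n\<ge>1. s n \<in> S" and hS: "\<forall>f\<in>S. homeo_plus I f"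
    and comm: "\<forall>f\<in>S. \<forall>x\<in>I. c (f x) = f (c x)" and "A \<subseteq> I"
  shows "c ` word s n ` A = word s n ` c ` A"
  unfolding image_image using word_commute[OF sS hS comm] assms(4) by (intro image_cong) auto

lemma commuting_displacement_nesting:
  assumes J: "open_interval J" "J \<subseteq> I" and "finite S" and hS: "\<forall>f\<in>S. homeo_plus I f"
    and "0 < u" "u \<le> 1" and sS: "\<forall>n\<ge>1. s n \<in> S"
    and summ: "summable (\<lambda>n. len (word s n ` J) powr u)"
    and c: "homeo_plus I c" and comm: "\<forall>f\<in>S. \<forall>x\<in>I. c (f x) = f (c x)"
    and cJ: "c ` J = J" and x: "x \<in> J" "c x \<noteq> x"
  shows "nesting I 2 u (insert c S)"
proof -
  define J2 where "J2 = {min x (c x)<..<max x (c x)}"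
  obtain p q where "J = {p<..<q}" using J(1) unfolding open_interval_def by blast
  moreover have "c x \<in> J" using cJ x by blast
  ultimately have gap: "{min x (c x)..max x (c x)} \<subseteq> J" using x by auto
  then have "J2 \<subset> J" using x unfolding J2_def by auto
  have "open_interval J2"
    unfolding J2_def open_interval_def using x
    by (intro exI[of _ "min x (c x)"] exI[of _ "max x (c x)"]) auto
  have "c ` J2 \<inter> J2 = {}"
    unfolding J2_def using gap J(2)
    by (intro strict_mono_on_displaces_gap[OF homeo_plusD(3)[OF c]]) auto
  have move: "c ` word s n ` J2 \<inter> word s n ` J2 = {}" for n
  proof -
    have "c ` J2 \<subseteq> I" "J2 \<subseteq> I" using \<open>J2 \<subset> J\<close> cJ J(2) by auto
    then have "word s n ` (c ` J2 \<inter> J2) = word s n ` c ` J2 \<inter> word s n ` J2"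
      using homeo_plusD(4)[OF homeo_plus_word[OF sS hS]] by (intro inj_on_image_Int) auto
    then show ?thesis
      using image_word_commute[OF sS hS comm \<open>J2 \<subseteq> I\<close>] \<open>c ` J2 \<inter> J2 = {}\<close> by simp
  qed
  have keep: "c ` word s n ` J = word s n ` J" for n
    using image_word_commute[OF sS hS comm J(2)] cJ by simp
  let ?J = "\<lambda>i::nat. if i = 1 then J else J2"
  have "(\<forall>i\<in>{1..2}. open_interval (?J i) \<and> ?J i \<subseteq> I) \<and> (\<forall>i\<in>{2..2}. ?J i \<subset> ?J (i - 1))"
    using J \<open>open_interval J2\<close> \<open>J2 \<subset> J\<close> by (auto simp: le_Suc_eq numeral_2_eq_2)
  moreover have "\<forall>i\<in>{2..2}. \<forall>n. \<exists>t\<in>insert c S.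
      t ` word s n ` ?J i \<inter> word s n ` ?J i = {} \<and>
      t ` word s n ` ?J (i - 1) = word s n ` ?J (i - 1)"
    using move keep by auto
  ultimately show ?thesis
    unfolding nesting_def using assms(3-7) summ c by (intro conjI exI[of _ ?J] exI[of _ s]) auto
qed

theorem lemma3p7:
  fixes a b \<tau> :: real and J :: "real set" and S :: "(real \<Rightarrow> real) set"
    and s :: "nat \<Rightarrow> real \<Rightarrow> real" and c :: "real \<Rightarrow> real"
  assumes "a < b"
    and "open_interval J" and "J \<subseteq> {a..b}"
    and "finite S" and "\<forall>f\<in>S. homeo_plus {a..b} f"
    and "0 < \<tau>" and "\<tau> < 1"
    and "\<forall>n\<ge>1. s n \<in> S"
    and "summable (\<lambda>n. len (word s n ` J) powr \<tau>)"
    and "homeo_plus {a..b} c"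
    and "\<forall>f\<in>S. \<forall>x\<in>{a..b}. c (f x) = f (c x)"
    and "c ` J = J" and "\<exists>x\<in>J. c x \<noteq> x"
  shows "nesting {a..b} 2 \<tau> (insert c S) \<and>
         \<not> (\<forall>f\<in>insert c S. diff_plus_1tau {a..b} \<tau> f)"
proof
  obtain x where x: "x \<in> J" "c x \<noteq> x" using assms(13) by blast
  show "nesting {a..b} 2 \<tau> (insert c S)"
    using commuting_displacement_nesting[OF assms(2-6) _ assms(8-12) x] \<open>\<tau> < 1\<close> by simp
  show "\<not> (\<forall>f\<in>insert c S. diff_plus_1tau {a..b} \<tau> f)"
  proof
    assume "\<forall>f\<in>insert c S. diff_plus_1tau {a..b} \<tau> f"
    then obtain D H m where D: "\<forall>f\<in>insert c S. holder_derivative_on {a..b} \<tau> H m f (D f)"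
      and "0 \<le> H" "0 < m"
      using diff_plus_1tau_uniform_holder_derivative[OF \<open>a < b\<close> \<open>0 < \<tau>\<close>] assms(4)
      by (metis finite_insert)
    obtain p q where J: "J = {p<..<q}" and "p < q"
      using assms(2) unfolding open_interval_def by blast
    then have pq: "a \<le> p" "p < q" "q \<le> b"
      using assms(3) closure_mono[OF assms(3)] by auto
    obtain K where "0 < K"
      "\<And>j u v. p < u \<Longrightarrow> u < v \<Longrightarrow> v < q \<Longrightarrow> v - u \<le> K * ((c ^^ j) v - (c ^^ j) u)"
      using commuting_iterates_uniformly_expanding[OF assms(8,5,10,11) D \<open>0 \<le> H\<close> \<open>0 < m\<close> \<open>0 < \<tau>\<close> pq]
        assms(9,12) unfolding J by blast
    then have "c x = x" using uniformly_expanding_iterates_fix assms(12) x(1) unfolding J by blast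
    with x(2) show False ..
  qed
qed

end
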